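(* Let $n\ge 2$ and let $X\subseteq\mathbb{Z}_{2n}^2$ with $|X|=4n+1$. Suppose there is $a\in\mathbb{Z}_{2n}$ such that exactly $2n-1$ elements of $X$ have first coordinate $a$. Then there exists $S\subseteq X$ with $|S|=2n$ and $\sum_{s\in S}s=(0,0)$. *)

theory Defs
  imports Main
begin

text \<open>The group Z_m (m > 0) is represented by the canonical residues {0..<m} of int;
  Z_m^2 is represented by pairs of such residues.\<close>

definition Zmod_sq :: "int \<Rightarrow> (int \<times> int) set" where
  "Zmod_sq m = {0..<m} \<times> {0..<m}"

definition zero_sum_mod :: "int \<Rightarrow> (int \<times> int) set \<Rightarrow> bool" where
  "zero_sum_mod m S \<longleftrightarrow> (\<Sum>s\<in>S. fst s) mod m = 0 \<and> (\<Sum>s\<in>S. snd s) mod m = 0"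

end

theory Submission
  imports Defs
begin

text \<open>
  Put \<open>N = 2n\<close>. The \<open>N - 1\<close> points of \<open>X\<close> with first coordinate \<open>a\<close> form the column
  \<open>{a} \<times> (\<int>\<^sub>N - {b})\<close> for some \<open>b\<close>; let \<open>B\<close> be the remaining \<open>N + 2\<close> points.
  Call \<open>T \<subseteq> B\<close> balanced if the first coordinates of \<open>T\<close> sum to \<open>|T| a\<close> modulo \<open>N\<close>.
  A balanced \<open>T\<close> is completed to a zero-sum \<open>N\<close>-set by \<open>N - |T|\<close> points of the column
  whose second coordinates have the right sum: for \<open>3 \<le> |T| \<le> N - 2\<close> such points always
  exist, and for \<open>|T| \<in> {2, N - 1}\<close> exactly one residue of the second-coordinate sum of \<open>T\<close>
  is bad, which is escaped by exchanging a point of \<open>T\<close> for a point of \<open>B\<close> with the same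
  first coordinate. Balanced sets of the required kind are produced by the classical fact
  that a zero-sum free sequence of \<open>N - 1\<close> elements of \<open>\<int>\<^sub>N\<close> is constant; the only case
  needing separate treatment is \<open>N = 4\<close> with two disjoint balanced pairs.
\<close>

lemma subset_sum_interval:
  fixes N j s :: nat
  assumes "j \<le> N" "\<Sum>{0..<j} \<le> s" "s \<le> \<Sum>{0..<j} + j * (N - j)"
  shows "\<exists>J \<subseteq> {0..<N}. card J = j \<and> \<Sum>J = s"
  using assms
proof (induction N arbitrary: j s)
  case 0
  then show ?case by auto
next
  case (Suc N)
  show ?case
  proof (cases "j \<le> N \<and> s \<le> \<Sum>{0..<j} + j * (N - j)")
    case True
    then obtain J where "J \<subseteq> {0..<N}" "card J = j" "\<Sum>J = s"
      using Suc.IH Suc.prems(2) by blast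
    then show ?thesis by (intro exI[of _ J]) auto
  next
    case False
    then obtain j' where j': "j = Suc j'" "j' \<le> N"
      using Suc.prems by (cases j) auto
    obtain d where d: "N = j' + d" using le_Suc_ex j' by blast
    have T: "\<Sum>{0..<j} = \<Sum>{0..<j'} + j'" using j' by simp
    have "\<Sum>{0..<j'} + N \<le> s"
    proof (cases d)
      case 0
      then show ?thesis using Suc.prems(2) T d by simp
    next
      case (Suc d')
      then have "\<Sum>{0..<j'} + j' + (j' + 1) * d' < s" using False T d j' by auto
      moreover have "d' \<le> (j' + 1) * d'" by simp
      ultimately show ?thesis using d Suc by linarith
    qed
    then have lo: "N \<le> s" "\<Sum>{0..<j'} \<le> s - N" by linarith+
    have "s - N \<le> \<Sum>{0..<j'} + j' * (N - j')"
      using Suc.prems(3) T d j' by (simp add: algebra_simps)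
    then obtain J where J: "J \<subseteq> {0..<N}" "card J = j'" "\<Sum>J = s - N"
      using Suc.IH j' lo by blast
    then have "N \<notin> J" "finite J" by (auto intro: finite_subset)
    then show ?thesis
      using J j' lo by (intro exI[of _ "insert N J"]) auto
  qed
qed

lemma subset_sum_mod_avoiding:
  fixes N j :: nat and b r :: int
  assumes "2 \<le> j" "j + 3 \<le> N" "b \<in> {0..<int N}"
  shows "\<exists>V \<subseteq> {0..<int N} - {b}. card V = j \<and> \<Sum>V mod int N = r mod int N"
proof -
  define rot where "rot i = (b + int i) mod int N" for i :: nat
  have rot_inj: "inj_on rot {0..<N}"
  proof (rule inj_onI)
    fix i i' assume "i \<in> {0..<N}" "i' \<in> {0..<N}" "rot i = rot i'"
    then have "int N dvd (b + int i) - (b + int i')"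
      unfolding rot_def by (simp only: mod_eq_dvd_iff)
    then have "int i mod int N = int i' mod int N"
      by (simp add: mod_eq_dvd_iff)
    then show "i = i'" using \<open>i \<in> _\<close> \<open>i' \<in> _\<close> by simp
  qed
  \<comment> \<open>\<open>rot (i + 1)\<close> for \<open>i < N - 1\<close> runs through the residues other than \<open>b\<close>, and the
    sums of the \<open>j\<close>-subsets of \<open>{0..<N - 1}\<close> fill an interval of length at least \<open>N\<close>\<close>
  define c where "c = int j * (b + 1) + int (\<Sum>{0..<j})"
  define t where "t = (r - c) mod int N"
  obtain p q where "j = p + 2" "N = j + q + 3"
    using assms(1,2) by (intro that[of "j - 2" "N - j - 3"]) simp_all
  then have "N - 1 \<le> j * (N - 1 - j)" by (simp add: algebra_simps)
  moreover have "nat t < N" using assms(2) by (simp add: t_def nat_less_iff)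
  ultimately have "nat t \<le> j * (N - 1 - j)" by linarith
  then obtain J where J: "J \<subseteq> {0..<N - 1}" "card J = j" "\<Sum>J = \<Sum>{0..<j} + nat t"
    using subset_sum_interval[of j "N - 1" "\<Sum>{0..<j} + nat t"] assms by force
  have "Suc ` J \<subseteq> {1..<N}" using J by auto
  then have inj: "inj_on (rot \<circ> Suc) J"
    by (intro comp_inj_on inj_on_subset[OF rot_inj]) auto
  have "rot (Suc i) \<in> {0..<int N} - {b}" if "i \<in> J" for i
  proof -
    have "rot (Suc i) \<noteq> rot 0" using inj_onD[OF rot_inj] that J by fastforce
    moreover have "rot 0 = b" using assms(3) by (simp add: rot_def)
    ultimately show ?thesis using assms by (simp add: rot_def)
  qed
  moreover have "card ((rot \<circ> Suc) ` J) = j" using card_image[OF inj] J by simp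
  moreover have "\<Sum>((rot \<circ> Suc) ` J) mod int N = r mod int N"
  proof -
    have "\<Sum>((rot \<circ> Suc) ` J) mod int N = (\<Sum>i\<in>J. b + 1 + int i) mod int N"
      unfolding sum.reindex[OF inj] rot_def by (simp add: mod_sum_eq add.assoc)
    also have "(\<Sum>i\<in>J. b + 1 + int i) = int j * (b + 1) + int (\<Sum>J)"
      using J(2) by (simp add: sum.distrib of_nat_sum)
    also have "\<dots> = c + t"
      using J(3) assms(2) by (simp add: c_def t_def)
    also have "\<dots> mod int N = r mod int N" unfolding t_def mod_add_right_eq by simp
    finally show ?thesis .
  qed
  ultimately show ?thesis by (intro exI[of _ "(rot \<circ> Suc) ` J"]) auto
qed

lemma prefix_sums_mod_bij:
  fixes f :: "'a \<Rightarrow> int"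
  assumes "distinct zs" "length zs + 1 = N"
    and zero_sum_free: "\<And>U. U \<subseteq> set zs \<Longrightarrow> U \<noteq> {} \<Longrightarrow> \<not> int N dvd sum f U"
  shows "bij_betw (\<lambda>i. sum_list (map f (take i zs)) mod int N) {1..length zs} {1..<int N}"
proof -
  let ?p = "\<lambda>i. sum_list (map f (take i zs))"
  have block: "\<not> int N dvd ?p j - ?p i" if "i < j" "j \<le> length zs" for i j
  proof -
    have "?p j - ?p i = sum f (set (take (j - i) (drop i zs)))"
      using take_add[of i "j - i" zs] that assms(1)
      by (simp add: sum_list_distinct_conv_sum_set[symmetric] distinct_take)
    moreover have "set (take (j - i) (drop i zs)) \<subseteq> set zs"
      by (meson in_set_dropD in_set_takeD subsetI)
    moreover have "take (j - i) (drop i zs) \<noteq> []" using that by simp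
    ultimately show ?thesis using zero_sum_free by simp
  qed
  have inj: "inj_on (\<lambda>i. ?p i mod int N) {1..length zs}"
  proof (rule linorder_inj_onI')
    fix i j assume "i \<in> {1..length zs}" "j \<in> {1..length zs}" "i < j"
    then show "?p i mod int N \<noteq> ?p j mod int N"
      using block[of i j] by (auto simp: mod_eq_dvd_iff dvd_diff_commute)
  qed
  have "?p i mod int N \<in> {1..<int N}" if "i \<in> {1..length zs}" for i
  proof -
    have "?p i mod int N \<noteq> 0" using block[of 0 i] that by (simp add: dvd_eq_mod_eq_0)
    moreover have "0 \<le> ?p i mod int N" "?p i mod int N < int N" using assms(2) by simp_all
    ultimately show ?thesis by simp
  qed
  then have "(\<lambda>i. ?p i mod int N) ` {1..length zs} \<subseteq> {1..<int N}" by blast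
  moreover have "card ((\<lambda>i. ?p i mod int N) ` {1..length zs}) = card {1..<int N}"
    using card_image[OF inj] assms(2) by simp
  ultimately show ?thesis
    using inj by (simp add: bij_betw_def card_subset_eq)
qed

lemma zero_sum_free_card_pred_mod_eq:
  fixes f :: "'a \<Rightarrow> int"
  assumes "finite E" "card E + 1 = N"
    and zero_sum_free: "\<And>U. U \<subseteq> E \<Longrightarrow> U \<noteq> {} \<Longrightarrow> \<not> int N dvd sum f U"
    and "x \<in> E" "y \<in> E"
  shows "f x mod int N = f y mod int N"
proof (cases "x = y")
  case False
  obtain rs where rs: "set rs = E - {x, y}" "distinct rs"
    using finite_distinct_list assms(1) by (metis finite_Diff)
  let ?p = "\<lambda>zs i. sum_list (map f (take i zs)) mod int N"
  have bij: "bij_betw (?p zs) {1..length zs} {1..<int N}"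
    if "zs = u # v # rs" "{u, v} = {x, y}" "u \<noteq> v" for zs u v
  proof (rule prefix_sums_mod_bij)
    show "distinct zs" using that rs by auto
    have "set zs = E" using that rs assms(4,5) by auto
    then show "length zs + 1 = N" using assms(2) \<open>distinct zs\<close> distinct_card by metis
    show "\<not> int N dvd sum f U" if "U \<subseteq> set zs" "U \<noteq> {}" for U
      using zero_sum_free that \<open>set zs = E\<close> by blast
  qed
  \<comment> \<open>the nonempty prefix sums of \<open>x, y, rs\<close> and of \<open>y, x, rs\<close> both run through all
    nonzero residues and agree from length 2 on, so the prefix sums of length 1 agree\<close>
  let ?S = "{2..length rs + 2}"
  have split: "{1..length rs + 2} = insert 1 ?S" by auto
  have residues: "insert (f u mod int N) (?p (u # v # rs) ` ?S) = {1..<int N}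
      \<and> f u mod int N \<notin> ?p (u # v # rs) ` ?S"
    if "{u, v} = {x, y}" "u \<noteq> v" for u v
  proof -
    have "bij_betw (?p (u # v # rs)) (insert 1 ?S) {1..<int N}"
      using bij[of _ u v] that split by simp
    then have "inj_on (?p (u # v # rs)) (insert 1 ?S)" "?p (u # v # rs) ` insert 1 ?S = {1..<int N}"
      by (simp_all add: bij_betw_def)
    moreover have "?p (u # v # rs) 1 = f u mod int N" by simp
    moreover have "?p (u # v # rs) 1 \<notin> ?p (u # v # rs) ` ?S"
      using inj_on_image_mem_iff[OF \<open>inj_on _ _\<close>, of 1 ?S] by auto
    ultimately show ?thesis by simp
  qed
  have same_tail: "?p (y # x # rs) ` ?S = ?p (x # y # rs) ` ?S"
    by (intro image_cong refl) (auto simp: take_Cons' ac_simps)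
  show ?thesis
    using residues[of x y] residues[of y x] same_tail by blast
qed simp

lemma sum_exchange:
  fixes f :: "'a \<Rightarrow> 'b::ab_group_add"
  assumes "finite T" "t \<in> T" "e \<notin> T"
  shows "sum f (insert e (T - {t})) = sum f T - f t + f e"
  using assms by (simp add: sum_diff1 algebra_simps)

lemma eq_if_dvd_diff:
  fixes u v m :: int
  assumes "u \<in> {0..<m}" "v \<in> {0..<m}" "m dvd u - v"
  shows "u = v"
proof -
  have "u mod m = v mod m" using assms(3) by (simp add: mod_eq_dvd_iff)
  then show ?thesis using assms(1,2) by simp
qed

lemma eq_remove_if_card_Suc:
  assumes "finite S" "A \<subseteq> S" "card A + 1 = card S"
  obtains b where "b \<in> S" "A = S - {b}"
proof -
  have "card (S - A) = 1" using assms by (simp add: card_Diff_subset finite_subset)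
  then obtain b where "S - A = {b}" by (rule card_1_singletonE)
  then show thesis using that assms(2) by blast
qed

lemma column_eq_Pair_remove:
  assumes "C \<subseteq> Zmod_sq (int N)" "\<And>x. x \<in> C \<Longrightarrow> fst x = a" "card C + 1 = N"
  obtains b where "b \<in> {0..<int N}" "C = Pair a ` ({0..<int N} - {b})"
proof -
  have C_eq: "C = Pair a ` snd ` C" using assms(2) by force
  have "inj_on snd C" using assms(2) by (intro inj_onI) (metis prod.expand)
  then have "card (snd ` C) + 1 = card {0..<int N}" using assms(3) by (simp add: card_image)
  moreover have "snd ` C \<subseteq> {0..<int N}" using assms(1) by (auto simp: Zmod_sq_def)
  ultimately obtain b where "b \<in> {0..<int N}" "snd ` C = {0..<int N} - {b}"
    using eq_remove_if_card_Suc by blast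
  then show thesis using that C_eq by metis
qed

locale short_column =
  fixes N :: nat and a b :: int and X :: "(int \<times> int) set"
  assumes N_ge_4: "4 \<le> N" and even_N: "even N"
    and X_subset: "X \<subseteq> Zmod_sq (int N)" and card_X: "card X = 2 * N + 1"
    and a_range: "a \<in> {0..<int N}" and b_range: "b \<in> {0..<int N}"
    and column_a: "{x \<in> X. fst x = a} = Pair a ` ({0..<int N} - {b})"
begin

definition B :: "(int \<times> int) set" where
  "B = {x \<in> X. fst x \<noteq> a}"

text \<open>A balanced \<open>U\<close> gets first-coordinate sum \<open>0\<close> modulo \<open>N\<close> when it is completed to an
  \<open>N\<close>-set by points of the column \<open>a\<close>.\<close>

definition balanced :: "(int \<times> int) set \<Rightarrow> bool" where
  "balanced U \<longleftrightarrow> int N dvd (\<Sum>x\<in>U. fst x - a)"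

definition solvable :: bool where
  "solvable \<longleftrightarrow> (\<exists>S\<subseteq>X. card S = N \<and> zero_sum_mod (int N) S)"

lemma X_range: "x \<in> X \<Longrightarrow> fst x \<in> {0..<int N} \<and> snd x \<in> {0..<int N}"
  using X_subset by (auto simp: Zmod_sq_def mem_Times_iff)

lemma finite_X: "finite X"
  using X_subset finite_subset unfolding Zmod_sq_def by blast

lemma B_subset: "B \<subseteq> X" and finite_B: "finite B"
  using finite_X by (auto simp: B_def)

lemma card_B: "card B = N + 2"
proof -
  let ?C = "Pair a ` ({0..<int N} - {b})"
  have X_eq: "X = ?C \<union> B" and disjoint: "?C \<inter> B = {}"
    using column_a by (auto simp: B_def)
  have "card (?C \<union> B) = card ?C + card B"
    using disjoint finite_B by (intro card_Un_disjoint) auto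
  \<comment> \<open>\<open>B\<close> depends on \<open>X\<close>, so \<open>X_eq\<close> may only be used from right to left\<close>
  then have "card X = card ?C + card B"
    by (simp only: X_eq[symmetric])
  moreover have "card ?C = N - 1"
    using b_range by (simp add: card_image inj_on_def)
  ultimately show ?thesis using card_X N_ge_4 by simp
qed

lemma fst_eq_if_dvd: "x \<in> X \<Longrightarrow> y \<in> X \<Longrightarrow> int N dvd fst x - fst y \<Longrightarrow> fst x = fst y"
  using X_range eq_if_dvd_diff by blast

lemma not_dvd_fst_diff: "x \<in> B \<Longrightarrow> \<not> int N dvd fst x - a"
  using X_range a_range eq_if_dvd_diff unfolding B_def by blast

lemma card_column_le:
  assumes "W \<subseteq> X" "\<And>x. x \<in> W \<Longrightarrow> fst x = c"
  shows "card W \<le> N"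
proof -
  have "inj_on snd W" using assms(2) by (intro inj_onI) (metis prod.expand)
  moreover have "snd ` W \<subseteq> {0..<int N}" using assms(1) X_range by blast
  ultimately have "card W \<le> card {0..<int N}" by (intro card_inj_on_le) auto
  then show ?thesis by simp
qed

lemma solvable_if_completion:
  assumes T: "T \<subseteq> B" "balanced T"
    and V: "V \<subseteq> {0..<int N} - {b}" "card T + card V = N"
    and snd_sum: "int N dvd \<Sum>V + (\<Sum>x\<in>T. snd x)"
  shows solvable
proof -
  let ?A = "Pair a ` V"
  have finite: "finite T" "finite ?A"
    using T(1) finite_B finite_subset V(1) by (auto intro: finite_subset)
  have disjoint: "T \<inter> ?A = {}" using T(1) by (auto simp: B_def)
  have sum_split: "(\<Sum>x\<in>T \<union> ?A. f x) = (\<Sum>x\<in>T. f x) + (\<Sum>v\<in>V. f (a, v))" for f :: "int \<times> int \<Rightarrow> int"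
    using finite disjoint by (simp add: sum.union_disjoint sum.reindex inj_on_def)
  have "(\<Sum>x\<in>T \<union> ?A. fst x) = (\<Sum>x\<in>T. fst x - a) + int N * a"
    unfolding V(2)[symmetric] by (simp add: sum_split sum_subtractf algebra_simps)
  then have "zero_sum_mod (int N) (T \<union> ?A)"
    using T(2) snd_sum unfolding zero_sum_mod_def balanced_def
    by (simp add: sum_split mod_eq_0_iff_dvd add.commute)
  moreover have "T \<union> ?A \<subseteq> X" using T(1) V(1) column_a B_subset by blast
  moreover have "card (T \<union> ?A) = N"
    using finite disjoint V(2) by (simp add: card_Un_disjoint card_image inj_on_def)
  ultimately show ?thesis unfolding solvable_def by blast
qed

lemma solvable_if_balanced_mid:
  assumes "T \<subseteq> B" "balanced T" "3 \<le> card T" "card T + 2 \<le> N"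
  shows solvable
proof -
  have "2 \<le> N - card T" "N - card T + 3 \<le> N" using assms(3,4) by simp_all
  from subset_sum_mod_avoiding[OF this b_range, of "- (\<Sum>x\<in>T. snd x)"]
  obtain V where "V \<subseteq> {0..<int N} - {b}" "card V = N - card T"
      "\<Sum>V mod int N = (- (\<Sum>x\<in>T. snd x)) mod int N"
    by blast
  then show ?thesis
    using assms(1,2,4) by (intro solvable_if_completion[of T V]) (auto simp: mod_eq_dvd_iff)
qed

lemma solvable_if_balanced_pair:
  assumes "T \<subseteq> B" "balanced T" "card T = 2"
    and "(\<Sum>x\<in>T. snd x) mod int N \<noteq> (2 * b - \<Sum>{0..<int N}) mod int N"
  shows solvable
proof -
  define s where "s = \<Sum>{0..<int N} - b + (\<Sum>x\<in>T. snd x)"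
  define c where "c = s mod int N"
  have s_c: "int N dvd s - c" unfolding c_def by (rule dvd_minus_mod)
  have "c \<noteq> b"
  proof
    assume "c = b"
    then have "int N dvd (\<Sum>x\<in>T. snd x) - (2 * b - \<Sum>{0..<int N})"
      using s_c unfolding s_def by (simp add: algebra_simps)
    then show False using assms(4) by (simp add: mod_eq_dvd_iff)
  qed
  moreover have "c \<in> {0..<int N}" using N_ge_4 by (simp add: c_def)
  ultimately have "card ({0..<int N} - {b, c}) = N - 2"
      "\<Sum>({0..<int N} - {b, c}) + (\<Sum>x\<in>T. snd x) = s - c"
    using b_range unfolding s_def by (simp_all add: card_Diff_subset sum_diff)
  then show ?thesis
    using assms(1-3) N_ge_4 s_c
    by (intro solvable_if_completion[of T "{0..<int N} - {b, c}"]) auto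
qed

lemma solvable_if_balanced_copair:
  assumes "T \<subseteq> B" "balanced T" "card T + 1 = N"
    and "(\<Sum>x\<in>T. snd x) mod int N \<noteq> (- b) mod int N"
  shows solvable
proof -
  define c where "c = (- (\<Sum>x\<in>T. snd x)) mod int N"
  have "c \<noteq> b"
  proof
    assume "c = b"
    then have "(- (\<Sum>x\<in>T. snd x)) mod int N = b mod int N" using b_range by (simp add: c_def)
    then show False using assms(4) by (simp add: mod_eq_dvd_iff dvd_diff_commute add.commute)
  qed
  moreover have "c \<in> {0..<int N}" using N_ge_4 by (simp add: c_def)
  moreover have "int N dvd c + (\<Sum>x\<in>T. snd x)"
    unfolding c_def by (simp add: dvd_eq_mod_eq_0 mod_add_left_eq)
  ultimately show ?thesis
    using assms(1-3) by (intro solvable_if_completion[of T "{c}"]) auto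
qed

lemma solvable_if_balanced_full:
  assumes "T \<subseteq> B" "balanced T" "card T = N" "int N dvd (\<Sum>x\<in>T. snd x)"
  shows solvable
  using assms by (intro solvable_if_completion[of T "{}"]) auto

lemma solvable_if_balanced_exchange:
  assumes T: "T \<subseteq> B" "balanced T" "2 \<le> card T" "card T < N"
    and t: "t \<in> T" and e: "e \<in> B" "e \<notin> T" "fst e = fst t"
  shows solvable
proof (cases "3 \<le> card T \<and> card T + 2 \<le> N")
  case True
  then show ?thesis using solvable_if_balanced_mid T(1,2) by blast
next
  case False
  \<comment> \<open>exchanging \<open>t\<close> for \<open>e\<close> keeps \<open>T\<close> balanced but changes its second-coordinate sum, so
    one of the two sets avoids the single residue excluded by the completion lemmas\<close>
  define T' where "T' = insert e (T - {t})"
  have finite_T: "finite T" using T(1) finite_B by (rule finite_subset)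
  have exchange: "(\<Sum>x\<in>T'. f x) = (\<Sum>x\<in>T. f x) - f t + f e" for f :: "int \<times> int \<Rightarrow> int"
    unfolding T'_def using finite_T t e(2) by (rule sum_exchange)
  have "T' \<subseteq> B" "card T' = card T" "balanced T'"
    using T t e finite_T exchange[of "\<lambda>x. fst x - a"]
    by (auto simp: T'_def balanced_def card_insert_if)
  have "snd e \<noteq> snd t" using e t by (metis prod.expand)
  then have "\<not> int N dvd snd e - snd t"
    using e(1) t T(1) B_subset X_range eq_if_dvd_diff by blast
  then have "(\<Sum>x\<in>T'. snd x) mod int N \<noteq> (\<Sum>x\<in>T. snd x) mod int N"
    by (simp add: exchange mod_eq_dvd_iff)
  then have one_of: "\<exists>U\<in>{T, T'}. (\<Sum>x\<in>U. snd x) mod int N \<noteq> r" for r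
    by auto
  have candidates: "U \<subseteq> B \<and> balanced U \<and> card U = card T" if "U \<in> {T, T'}" for U
    using that T \<open>T' \<subseteq> B\<close> \<open>card T' = card T\<close> \<open>balanced T'\<close> by auto
  from False T(3,4) consider "card T = 2" | "card T + 1 = N" by linarith
  then show ?thesis
  proof cases
    case 1
    with one_of[of "(2 * b - \<Sum>{0..<int N}) mod int N"] candidates
    show ?thesis using solvable_if_balanced_pair by metis
  next
    case 2
    with one_of[of "(- b) mod int N"] candidates
    show ?thesis using solvable_if_balanced_copair by metis
  qed
qed

lemma solvable_if_two_balanced_pairs:
  assumes "P \<subseteq> B" "Q \<subseteq> B" "P \<inter> Q = {}" "card P = 2" "card Q = 2" "balanced P" "balanced Q"
  shows solvable
proof -
  have finite: "finite P" "finite Q" using assms(1,2) finite_B finite_subset by blast+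
  have sum_Un: "(\<Sum>x\<in>P \<union> Q. f x) = (\<Sum>x\<in>P. f x) + (\<Sum>x\<in>Q. f x)" for f :: "int \<times> int \<Rightarrow> int"
    using finite assms(3) by (rule sum.union_disjoint)
  have T: "P \<union> Q \<subseteq> B" "card (P \<union> Q) = 4" "balanced (P \<union> Q)"
    using assms finite sum_Un[of "\<lambda>x. fst x - a"] by (auto simp: card_Un_disjoint balanced_def)
  show ?thesis
  proof (cases "6 \<le> N")
    case True
    then show ?thesis using solvable_if_balanced_mid[OF T(1,3)] T(2) by simp
  next
    case False
    then have "N = 4" using N_ge_4 even_N by presburger
    moreover have "{0..<4 :: int} = {0, 1, 2, 3}" by auto
    ultimately have "\<Sum>{0..<int N} = 6" by simp
    show ?thesis
    proof (rule ccontr)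
      assume "\<not> solvable"
      then have "(\<Sum>x\<in>U. snd x) mod 4 = (2 * b - 6) mod 4" if "U \<in> {P, Q}" for U
        using solvable_if_balanced_pair that assms \<open>N = 4\<close> \<open>\<Sum>{0..<int N} = 6\<close> by auto
      then have "(\<Sum>x\<in>P. snd x) mod 4 = (2 * b - 6) mod 4" "(\<Sum>x\<in>Q. snd x) mod 4 = (2 * b - 6) mod 4"
        by simp_all
      then have "4 dvd (\<Sum>x\<in>P. snd x) + (\<Sum>x\<in>Q. snd x)" by presburger
      then show False
        using solvable_if_balanced_full[OF T(1,3)] T(2) \<open>\<not> solvable\<close> \<open>N = 4\<close> sum_Un by simp
    qed
  qed
qed

definition balanced_free :: "(int \<times> int) set \<Rightarrow> bool" where
  "balanced_free W \<longleftrightarrow> (\<forall>U\<subseteq>W. U \<noteq> {} \<longrightarrow> card U + 2 \<le> N \<longrightarrow> \<not> balanced U)"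

lemma exists_balanced_subset_if_not_column:
  assumes E: "E \<subseteq> B" "card E + 1 = N" and xy: "x \<in> E" "y \<in> E" "fst x \<noteq> fst y"
  obtains U where "U \<subseteq> E" "U \<noteq> {}" "balanced U"
proof -
  have "\<exists>U\<subseteq>E. U \<noteq> {} \<and> balanced U"
  proof (rule ccontr)
    assume "\<not> (\<exists>U\<subseteq>E. U \<noteq> {} \<and> balanced U)"
    then have zero_sum_free: "\<not> int N dvd (\<Sum>z\<in>U. fst z - a)" if "U \<subseteq> E" "U \<noteq> {}" for U
      using that unfolding balanced_def by blast
    have finite_E: "finite E" using E(1) finite_B by (rule finite_subset)
    have "(fst x - a) mod int N = (fst y - a) mod int N"
      by (rule zero_sum_free_card_pred_mod_eq[where f = "\<lambda>z. fst z - a", OF finite_E E(2) zero_sum_free xy(1,2)])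
    then have "int N dvd fst x - fst y" by (simp add: mod_eq_dvd_iff)
    moreover have "x \<in> X" "y \<in> X" using xy(1,2) E(1) B_subset by blast+
    ultimately have "fst x = fst y" using fst_eq_if_dvd by blast
    then show False using xy(3) by simp
  qed
  then show thesis using that by blast
qed

lemma balanced_if_not_column:
  assumes W: "W \<subseteq> B" "balanced_free W"
    and E: "E \<subseteq> W" "card E + 1 = N" and xy: "x \<in> E" "y \<in> E" "fst x \<noteq> fst y"
  shows "balanced E"
proof -
  have "E \<subseteq> B" using E(1) W(1) by blast
  then obtain U where U: "U \<subseteq> E" "U \<noteq> {}" "balanced U"
    using E(2) xy by (rule exists_balanced_subset_if_not_column)
  have finite_E: "finite E" using \<open>E \<subseteq> B\<close> finite_B by (rule finite_subset)
  have "\<not> card U + 2 \<le> N" using W(2) E(1) U unfolding balanced_free_def by blast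
  moreover have "card U \<le> card E" using finite_E U(1) by (rule card_mono)
  ultimately have "card U = card E" using E(2) by linarith
  with finite_E U(1) have "U = E" by (rule card_subset_eq)
  then show ?thesis using U(3) by simp
qed

lemma exists_balanced_card_pred:
  assumes W: "W \<subseteq> B" "balanced_free W" "N \<le> card W"
    and xy: "x \<in> W" "y \<in> W" "fst x \<noteq> fst y"
  obtains E where "E \<subseteq> W" "card E + 1 = N" "x \<in> E" "y \<in> E" "balanced E"
proof -
  have finite_W: "finite W" using W(1) finite_B by (rule finite_subset)
  have "x \<noteq> y" using xy(3) by blast
  then have "N - 3 \<le> card (W - {x, y})" using W(3) xy(1,2) finite_W by (simp add: card_Diff_subset)
  then obtain R where R: "R \<subseteq> W - {x, y}" "card R = N - 3" "finite R"
    by (rule obtain_subset_with_card_n)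
  moreover have "x \<notin> R" "y \<notin> R" using R(1) by auto
  ultimately have E: "insert x (insert y R) \<subseteq> W" "card (insert x (insert y R)) + 1 = N"
    using xy \<open>x \<noteq> y\<close> N_ge_4 by auto
  have "balanced (insert x (insert y R))"
    by (rule balanced_if_not_column[OF W(1,2) E _ _ xy(3)]) auto
  with E show thesis by (intro that) auto
qed

lemma solvable_if_balanced_free_not_column:
  assumes W: "W \<subseteq> B" "balanced_free W" "N \<le> card W"
    and xy: "x \<in> W" "y \<in> W" "fst x \<noteq> fst y"
  shows solvable
proof -
  obtain E where E: "E \<subseteq> W" "card E + 1 = N" "x \<in> E" "y \<in> E" "balanced E"
    using exists_balanced_card_pred[OF W xy] .
  have "E \<subseteq> B" using E(1) W(1) by blast
  then have finite_E: "finite E" using finite_B by (rule finite_subset)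
  have "\<not> W \<subseteq> E"
  proof
    assume "W \<subseteq> E"
    then have "card W \<le> card E" using finite_E by (simp add: card_mono)
    then show False using E(2) W(3) by linarith
  qed
  then obtain e where e: "e \<in> W" "e \<notin> E" by blast
  have exchange: "E \<subseteq> B" "2 \<le> card E" "card E < N" "e \<in> B"
    using E(1,2) N_ge_4 e(1) W(1) by auto
  consider "fst e = fst x" | "fst e = fst y" | "fst e \<noteq> fst x" "fst e \<noteq> fst y" by blast
  then show ?thesis
  proof cases
    case 1
    then show ?thesis
      by (intro solvable_if_balanced_exchange[OF exchange(1) E(5) exchange(2,3) E(3) exchange(4) e(2)])
  next
    case 2
    then show ?thesis
      by (intro solvable_if_balanced_exchange[OF exchange(1) E(5) exchange(2,3) E(4) exchange(4) e(2)])
  next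
    case 3
    define E' where "E' = insert e (E - {x})"
    have "E' \<subseteq> W" "card E' + 1 = N" "e \<in> E'" "y \<in> E'"
      using E e xy(3) finite_E N_ge_4 by (auto simp: E'_def card_insert_if)
    from balanced_if_not_column[OF W(1,2) this 3(2)] have "balanced E'" .
    have "(\<Sum>z\<in>E'. fst z - a) = (\<Sum>z\<in>E. fst z - a) - (fst x - a) + (fst e - a)"
      unfolding E'_def using finite_E E(3) e(2) by (rule sum_exchange)
    then have "fst e - fst x = (\<Sum>z\<in>E'. fst z - a) - (\<Sum>z\<in>E. fst z - a)" by simp
    then have "int N dvd fst e - fst x"
      using E(5) \<open>balanced E'\<close> unfolding balanced_def by simp
    then show ?thesis using fst_eq_if_dvd e(1) xy(1) W(1) B_subset 3 by blast
  qed
qed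

lemma exists_balanced_subset_through:
  assumes W: "W \<subseteq> B" "balanced_free W" and K: "K \<subseteq> W" "card K + 2 = N"
    and x: "x \<in> B" "x \<notin> W" and w: "w \<in> K" "fst x \<noteq> fst w"
  obtains U where "U \<subseteq> insert x K" "x \<in> U" "U \<noteq> {x}" "balanced U"
proof -
  have "K \<subseteq> B" using K(1) W(1) by blast
  then have finite_K: "finite K" using finite_B by (rule finite_subset)
  have "x \<notin> K" using K(1) x(2) by blast
  then have "insert x K \<subseteq> B" "card (insert x K) + 1 = N"
    using K W(1) x(1) finite_K by auto
  then obtain U where U: "U \<subseteq> insert x K" "U \<noteq> {}" "balanced U"
    using exists_balanced_subset_if_not_column w by blast
  have "x \<in> U"
  proof (rule ccontr)
    assume "x \<notin> U"
    then have "U \<subseteq> K" using U(1) by blast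
    then have "U \<subseteq> W" "card U + 2 \<le> N" using K card_mono[OF finite_K] by auto
    then show False using W(2) U(2,3) unfolding balanced_free_def by blast
  qed
  moreover have "U \<noteq> {x}" using U(3) not_dvd_fst_diff[OF x(1)] by (auto simp: balanced_def)
  ultimately show thesis using that U(1,3) by blast
qed

lemma solvable_if_balanced_free_column:
  assumes W: "W \<subseteq> B" "balanced_free W" "card W = N"
    and column: "\<And>z. z \<in> W \<Longrightarrow> fst z = c" and x: "x \<in> B" "x \<notin> W"
  shows solvable
proof -
  have finite_W: "finite W" using W(1) finite_B by (rule finite_subset)
  have "fst x \<noteq> c"
  proof
    assume "fst x = c"
    then have "card (insert x W) \<le> N"
      using column x(1) W(1) B_subset by (intro card_column_le) auto
    then show False using W(3) x(2) finite_W by simp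
  qed
  have "N - 2 \<le> card W" using W(3) by simp
  then obtain K where K: "K \<subseteq> W" "card K = N - 2" "finite K"
    by (rule obtain_subset_with_card_n)
  have "K \<noteq> {}" using K(2) N_ge_4 by auto
  then obtain w where w: "w \<in> K" by blast
  then have "fst w = c" using column K(1) by blast
  then have "fst x \<noteq> fst w" using \<open>fst x \<noteq> c\<close> by simp
  have "card K + 2 = N" using K(2) N_ge_4 by simp
  obtain U where U: "U \<subseteq> insert x K" "x \<in> U" "U \<noteq> {x}" "balanced U"
    by (rule exists_balanced_subset_through[OF W(1,2) K(1) \<open>card K + 2 = N\<close> x w \<open>fst x \<noteq> fst w\<close>])
  then obtain t where t: "t \<in> U" "t \<noteq> x" by blast
  have finite_U: "finite U" using U(1) by (rule finite_subset) (simp add: K(3))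
  have "U - {x} \<subseteq> K" using U(1) by blast
  with K(3) have "card (U - {x}) \<le> card K" by (rule card_mono)
  then have "card (U - {x}) < card W" using K(2) W(3) N_ge_4 by linarith
  have "\<not> W \<subseteq> U - {x}"
  proof
    assume "W \<subseteq> U - {x}"
    then have "card W \<le> card (U - {x})" using finite_U by (simp add: card_mono)
    then show False using \<open>card (U - {x}) < card W\<close> by simp
  qed
  then obtain e where e: "e \<in> W" "e \<notin> U - {x}" by blast
  have U_B: "U \<subseteq> B" using U(1) K(1) W(1) x(1) by blast
  have "card U \<le> card (insert x K)" using _ U(1) by (rule card_mono) (simp add: K(3))
  moreover have "x \<notin> K" using K(1) x(2) by blast
  moreover have "card {x, t} \<le> card U" using finite_U by (rule card_mono) (use U(2) t in auto)
  ultimately have card_U: "2 \<le> card U" "card U < N" using K(2,3) N_ge_4 t(2) by auto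
  have "t \<in> W" using t \<open>U - {x} \<subseteq> K\<close> K(1) by blast
  then have e_B: "e \<in> B" "e \<notin> U" "fst e = fst t" using e x(2) W(1) column by auto
  show ?thesis using solvable_if_balanced_exchange[OF U_B U(4) card_U t(1) e_B] .
qed

lemma solvable_or_balanced_free:
  assumes "W \<subseteq> B" and no_pair: "\<And>U. U \<subseteq> W \<Longrightarrow> card U = 2 \<Longrightarrow> \<not> balanced U"
  shows "solvable \<or> balanced_free W"
proof (cases solvable)
  case False
  have "\<not> balanced U" if U: "U \<subseteq> W" "U \<noteq> {}" "card U + 2 \<le> N" for U
  proof -
    have "U \<subseteq> B" using U(1) assms(1) by blast
    then have "finite U" using finite_B by (rule finite_subset)
    then have "card U \<noteq> 0" using U(2) by simp
    then consider "card U = 1" | "card U = 2" | "3 \<le> card U" by linarith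
    then show ?thesis
    proof cases
      case 1
      then obtain z where "U = {z}" by (rule card_1_singletonE)
      then show ?thesis using not_dvd_fst_diff \<open>U \<subseteq> B\<close> by (simp add: balanced_def)
    next
      case 2
      then show ?thesis using no_pair U(1) by blast
    next
      case 3
      then show ?thesis using solvable_if_balanced_mid[OF \<open>U \<subseteq> B\<close> _ 3 U(3)] False by blast
    qed
  qed
  then show ?thesis unfolding balanced_free_def by blast
qed simp

lemma solvable_if_balanced_free:
  assumes W: "W \<subseteq> B" "balanced_free W" "card W = N" and x: "x \<in> B" "x \<notin> W"
  shows solvable
proof (cases "\<exists>y\<in>W. \<exists>z\<in>W. fst y \<noteq> fst z")
  case True
  then show ?thesis using solvable_if_balanced_free_not_column W by auto
next
  case False
  have "W \<noteq> {}" using W(3) N_ge_4 by auto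
  then obtain w where "w \<in> W" by blast
  then have "\<And>z. z \<in> W \<Longrightarrow> fst z = fst w" using False by blast
  then show ?thesis using solvable_if_balanced_free_column W x by blast
qed

lemma solvable: solvable
proof (cases "\<exists>P\<subseteq>B. card P = 2 \<and> balanced P")
  case False
  then have "solvable \<or> balanced_free B" by (intro solvable_or_balanced_free) auto
  moreover have "\<exists>x\<in>B. \<exists>y\<in>B. fst x \<noteq> fst y"
  proof (rule ccontr)
    assume column: "\<not> (\<exists>x\<in>B. \<exists>y\<in>B. fst x \<noteq> fst y)"
    have "B \<noteq> {}" using card_B by auto
    then obtain x where "x \<in> B" by blast
    then have "card B \<le> N" using column card_column_le[OF B_subset, of "fst x"] by blast
    then show False using card_B by simp
  qed
  ultimately show ?thesis
    using solvable_if_balanced_free_not_column[OF order_refl] card_B by auto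
next
  case True
  then obtain P where P: "P \<subseteq> B" "card P = 2" "balanced P" by blast
  show ?thesis
  proof (cases "\<exists>Q\<subseteq>B - P. card Q = 2 \<and> balanced Q")
    case True
    then show ?thesis using solvable_if_two_balanced_pairs P by blast
  next
    case False
    then have "solvable \<or> balanced_free (B - P)" by (intro solvable_or_balanced_free) auto
    moreover have "card (B - P) = N"
      using P finite_B card_B by (simp add: card_Diff_subset finite_subset)
    moreover have "P \<noteq> {}" using P(2) by auto
    then obtain x where "x \<in> P" by blast
    ultimately show ?thesis using solvable_if_balanced_free P(1) by blast
  qed
qed

end

theorem theorem3p2:
  fixes n :: nat and X :: "(int \<times> int) set"
  assumes "n \<ge> 2"
    and "X \<subseteq> Zmod_sq (2 * int n)"
    and "card X = 4 * n + 1"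
    and "\<exists>a \<in> {0..<2 * int n}. card {x \<in> X. fst x = a} = 2 * n - 1"
  shows "\<exists>S \<subseteq> X. card S = 2 * n \<and> zero_sum_mod (2 * int n) S"
proof -
  define N where "N = 2 * n"
  have int_N: "int N = 2 * int n" by (simp add: N_def)
  obtain a where a: "a \<in> {0..<int N}" "card {x \<in> X. fst x = a} + 1 = N"
    using assms(1,4) unfolding int_N N_def by auto
  have "{x \<in> X. fst x = a} \<subseteq> Zmod_sq (int N)" using assms(2) int_N by auto
  moreover have "\<And>x. x \<in> {x \<in> X. fst x = a} \<Longrightarrow> fst x = a" by simp
  ultimately obtain b where "b \<in> {0..<int N}" "{x \<in> X. fst x = a} = Pair a ` ({0..<int N} - {b})"
    using a(2) by (rule column_eq_Pair_remove)
  then interpret short_column N a b X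
    using assms(1-3) a(1) by unfold_locales (auto simp: N_def)
  from solvable show ?thesis unfolding solvable_def by (simp add: N_def)
qed

end
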